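(* Let $1\le m<n$, let $h\in\mathbb{R}[x_1,\ldots,x_n]$, and let $\boldsymbol{\ell}\in\mathbb{R}^{n\times m}$, $\mathbf{s}\in\mathbb{R}^{n\times(n-m)}$ be such that $[\boldsymbol{\ell},\mathbf{s}]$ is an orthogonal $n\times n$ matrix. Let $\theta_1,\ldots,\theta_r>0$ and $\mathbf{v}_1,\ldots,\mathbf{v}_r\in\mathcal{E}_{n-m}$. Define, for $\mathbf{x}\in\mathcal{E}_n$, \[ \hat h(\mathbf{x}):=\sum_{j=1}^r\theta_j\,h\big(\boldsymbol{\ell}\boldsymbol{\ell}^T\mathbf{x}+(1-\|\boldsymbol{\ell}^T\mathbf{x}\|^2)^{1/2}\,\mathbf{s}\mathbf{v}_j\big), \] and the polynomial $\hat f\in\mathbb{R}[X_1,\ldots,X_m,Y]$ by \[ \hat f(X,Y):=\sum_{j=1}^r\theta_j\,h\big(\boldsymbol{\ell}X+Y\,\mathbf{s}\mathbf{v}_j\big),\qquad (X,Y)\in\mathbb{R}^m\times\mathbb{R}. \] Let \[ \rho^+:=\min\{\hat f(X,Y):(X,Y)\in\mathbb{S}^m,\ Y\ge0\},\qquad \rho^-:=\min\{\hat f(X,-Y):(X,Y)\in\mathbb{S}^m,\ Y\le0\}, \] and $\rho:=\min[\rho^+,\rho^-]$ (so that $\rho=\min\{\hat f(X,|Y|):(X,Y)\in\mathbb{S}^m\}$). Then \[ \min\{\hat h(\mathbf{x}):\mathbf{x}\in\mathbb{S}^{n-1}\}=\min\{\hat h(\mathbf{x}):\mathbf{x}\in\mathcal{E}_n\}=\rho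 . \]
   Context: $\mathcal{E}_k=\{\mathbf{x}\in\mathbb{R}^k:\|\mathbf{x}\|\le1\}$ is the closed Euclidean unit ball and $\mathbb{S}^{k-1}=\{\mathbf{x}\in\mathbb{R}^k:\|\mathbf{x}\|=1\}$ the unit sphere of $\mathbb{R}^k$ (so $\mathbb{S}^m\subset\mathbb{R}^{m+1}$). In the paper, the columns of $\boldsymbol{\ell}$ and $\mathbf{s}$ are orthonormal eigenvectors of $\mathrm{E}_{\mu_n}[\nabla h\nabla h^T]$ ($\mu_n$ the uniform probability on $\mathcal{E}_n$) associated with the $m$ largest, resp. the remaining $n-m$, eigenvalues, and $(\theta_j,\mathbf{v}_j)$ is a cubature rule on $\mathcal{E}_{n-m}$ exact for the degree of $h$; only the orthogonality of $[\boldsymbol{\ell},\mathbf{s}]$ and $\theta_j>0$, $\mathbf{v}_j\in\mathcal{E}_{n-m}$ are used in the statement. *)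

theory Defs
  imports "HOL-Analysis.Analysis"
begin

text \<open>Over the reals this is exactly
  the set of evaluation maps of elements of R[x_1,...,x_n].\<close>
inductive real_poly_fun :: "(real ^ 'n \<Rightarrow> real) \<Rightarrow> bool" where
  const: "real_poly_fun (\<lambda>x. c)"
| coord: "real_poly_fun (\<lambda>x. x $ i)"
| add: "real_poly_fun p \<Longrightarrow> real_poly_fun q \<Longrightarrow> real_poly_fun (\<lambda>x. p x + q x)"
| mult: "real_poly_fun p \<Longrightarrow> real_poly_fun q \<Longrightarrow> real_poly_fun (\<lambda>x. p x * q x)"

text \<open>The n x n matrix [l, s] with n = m + (n-m), rows and columns indexed by 'm + 'k.\<close>
definition block_cols :: "real ^ 'm ^ ('m + 'k) \<Rightarrow> real ^ 'k ^ ('m + 'k) \<Rightarrow> real ^ ('m + 'k) ^ ('m + 'k)" where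
  "block_cols l s = (\<chi> i j. case j of Inl a \<Rightarrow> l $ i $ a | Inr b \<Rightarrow> s $ i $ b)"

end

theory Submission
  imports Defs
begin

text \<open>
  The integrand of \<open>hhat\<close> only sees \<open>x\<close> through the point
  \<open>(l\<^sup>T x, (1 - \<parallel>l\<^sup>T x\<parallel>\<^sup>2)\<^sup>1\<^sup>/\<^sup>2)\<close>, so \<open>hhat = fhat \<circ> c\<close> for this coordinate map \<open>c\<close>.
  Orthogonality of \<open>[l, s]\<close> gives \<open>\<parallel>l\<^sup>T x\<parallel> \<le> \<parallel>x\<parallel>\<close>, so \<open>c\<close> sends the unit ball into the
  closed upper hemisphere of \<open>\<real>\<^sup>m \<times> \<real>\<close>; conversely \<open>(X, Y)\<close> on that hemisphere is
  the image of the unit vector \<open>l X + Y s e\<close> for any unit vector \<open>e\<close>. Hence \<open>hhat\<close>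
  takes exactly the values of \<open>fhat\<close> on the hemisphere, both on the sphere and on
  the ball. Reflecting \<open>Y \<mapsto> -Y\<close> identifies the two sets defining \<open>\<rho>\<^sup>+\<close> and \<open>\<rho>\<^sup>-\<close>, and
  the common infimum is attained since \<open>fhat\<close> is continuous on a compact set.
\<close>

lemma real_poly_fun_continuous_on: "real_poly_fun h \<Longrightarrow> continuous_on A h"
  by (induction rule: real_poly_fun.induct) (auto intro!: continuous_intros)

lemma orthogonal_matrix_norm_mult:
  "orthogonal_matrix (A :: real^'n^'n) \<Longrightarrow> norm (A *v x) = norm x"
  by (metis orthogonal_transformation_matrix orthogonal_transformation_norm
      matrix_of_matrix_vector_mul matrix_vector_mul_linear)

lemma sum_UNIV_Plus:
  "(\<Sum>i\<in>UNIV. f i) = (\<Sum>a\<in>UNIV. f (Inl a)) + (\<Sum>b\<in>UNIV. f (Inr b))"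
  for f :: "'a::finite + 'b::finite \<Rightarrow> 'c::comm_monoid_add"
  by (simp flip: UNIV_Plus_UNIV add: sum.Plus comp_def)

definition vec_join :: "real^'m \<Rightarrow> real^'k \<Rightarrow> real^('m + 'k)" where
  "vec_join X W = (\<chi> i. case i of Inl a \<Rightarrow> X $ a | Inr b \<Rightarrow> W $ b)"

lemma vec_join_nth_Inl [simp]: "vec_join X W $ Inl a = X $ a"
  by (simp add: vec_join_def)

lemma norm_vec_join_squared: "(norm (vec_join X W))\<^sup>2 = (norm X)\<^sup>2 + (norm W)\<^sup>2"
  by (simp add: norm_vec_def L2_set_def vec_join_def sum_UNIV_Plus sum_nonneg)

lemma transpose_block_cols_mult:
  "transpose (block_cols l s) *v x = vec_join (transpose l *v x) (transpose s *v x)"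
  by (simp add: vec_eq_iff vec_join_def matrix_vector_mult_def transpose_def block_cols_def
      split: sum.split)

lemma block_cols_mult_vec_join: "block_cols l s *v vec_join X W = l *v X + s *v W"
  by (simp add: vec_eq_iff vec_join_def matrix_vector_mult_def block_cols_def sum_UNIV_Plus)

lemma norm_transpose_left_block_le:
  assumes "orthogonal_matrix (block_cols l s)"
  shows "norm (transpose l *v x) \<le> norm x"
proof -
  have "(norm (transpose l *v x))\<^sup>2 \<le> (norm (transpose (block_cols l s) *v x))\<^sup>2"
    unfolding transpose_block_cols_mult norm_vec_join_squared by simp
  also have "\<dots> = (norm x)\<^sup>2"
    using assms by (metis orthogonal_matrix_norm_mult orthogonal_matrix_transpose)
  finally show ?thesis
    by (simp add: power2_le_iff_abs_le)
qed

lemma block_cols_orthogonal_coordinates: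
  assumes "orthogonal_matrix (block_cols l s)"
  shows "transpose l *v (l *v X + s *v W) = X"
    and "(norm (l *v X + s *v W))\<^sup>2 = (norm X)\<^sup>2 + (norm W)\<^sup>2"
proof -
  let ?Q = "block_cols l s"
  have "vec_join (transpose l *v (l *v X + s *v W)) (transpose s *v (l *v X + s *v W))
        = transpose ?Q *v (?Q *v vec_join X W)"
    by (simp only: transpose_block_cols_mult block_cols_mult_vec_join)
  also have "\<dots> = vec_join X W"
    using assms by (simp add: matrix_vector_mul_assoc orthogonal_matrix)
  finally show "transpose l *v (l *v X + s *v W) = X"
    by (metis vec_eq_iff vec_join_nth_Inl)
  show "(norm (l *v X + s *v W))\<^sup>2 = (norm X)\<^sup>2 + (norm W)\<^sup>2"
    using assms orthogonal_matrix_norm_mult[of ?Q "vec_join X W"]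
    by (simp add: block_cols_mult_vec_join norm_vec_join_squared)
qed

definition upper_hemisphere :: "('a::real_normed_vector \<times> real) set" where
  "upper_hemisphere = {p \<in> sphere 0 1. snd p \<ge> 0}"

lemma compact_upper_hemisphere:
  "compact (upper_hemisphere :: ('a::euclidean_space \<times> real) set)"
proof -
  have "closed {p :: 'a \<times> real. snd p \<ge> 0}"
    by (rule closed_Collect_le) (auto intro!: continuous_intros)
  then have "compact (sphere 0 1 \<inter> {p :: 'a \<times> real. snd p \<ge> 0})"
    by (intro compact_Int_closed compact_sphere)
  then show ?thesis
    by (simp add: upper_hemisphere_def Int_def)
qed

lemma upper_hemisphere_nonempty:
  "(upper_hemisphere :: ('a::real_normed_vector \<times> real) set) \<noteq> {}"
proof -
  have "(0, 1) \<in> (upper_hemisphere :: ('a \<times> real) set)"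
    by (simp add: upper_hemisphere_def norm_Pair)
  then show ?thesis
    by blast
qed

lemma values_upper_hemisphere:
  fixes f :: "'a::real_normed_vector \<Rightarrow> real \<Rightarrow> 'b"
  shows "{f X Y | X Y. (X, Y) \<in> sphere 0 1 \<and> Y \<ge> 0} = case_prod f ` upper_hemisphere"
  by (auto simp: upper_hemisphere_def image_iff) blast+

lemma values_lower_hemisphere_reflected:
  fixes f :: "'a::real_normed_vector \<Rightarrow> real \<Rightarrow> 'b"
  shows "{f X (- Y) | X Y. (X, Y) \<in> sphere 0 1 \<and> Y \<le> 0} = case_prod f ` upper_hemisphere"
proof -
  have "(X, - Y) \<in> sphere 0 1 \<longleftrightarrow> (X, Y) \<in> sphere 0 1" for X :: 'a and Y :: real
    by (simp add: norm_Pair)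
  then have "{f X (- Y) | X Y. (X, Y) \<in> sphere 0 1 \<and> Y \<le> 0}
      = {f X Y | X Y. (X, Y) \<in> sphere 0 1 \<and> Y \<ge> 0}"
    by (smt (verit, best) Collect_cong minus_minus neg_0_le_iff_le)
  then show ?thesis
    by (simp only: values_upper_hemisphere)
qed

definition hemisphere_coords :: "real^'m^'n \<Rightarrow> real^'n \<Rightarrow> (real^'m) \<times> real" where
  "hemisphere_coords l x = (transpose l *v x, sqrt (1 - (norm (transpose l *v x))\<^sup>2))"

lemma hemisphere_coords_cball_subset:
  assumes "orthogonal_matrix (block_cols l s)"
  shows "hemisphere_coords l ` cball 0 1 \<subseteq> upper_hemisphere"
proof
  fix p assume "p \<in> hemisphere_coords l ` cball 0 1"
  then obtain x where x: "norm x \<le> 1" and p: "p = hemisphere_coords l x"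
    by auto
  have "norm (transpose l *v x) \<le> 1"
    using norm_transpose_left_block_le[OF assms, of x] x by linarith
  then have "(norm (transpose l *v x))\<^sup>2 \<le> 1"
    by (simp add: power_le_one)
  then show "p \<in> upper_hemisphere"
    by (simp add: p hemisphere_coords_def upper_hemisphere_def norm_Pair)
qed

lemma upper_hemisphere_subset_hemisphere_coords:
  fixes l :: "real^'m::finite^('m + 'k::finite)" and s :: "real^'k^('m + 'k)"
  assumes orth: "orthogonal_matrix (block_cols l s)"
  shows "upper_hemisphere \<subseteq> hemisphere_coords l ` sphere 0 1"
proof
  fix p :: "(real^'m) \<times> real" assume "p \<in> upper_hemisphere"
  then obtain X Y where p: "p = (X, Y)" and Y: "Y \<ge> 0" and XY: "(norm X)\<^sup>2 + Y\<^sup>2 = 1"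
    by (cases p) (auto simp: upper_hemisphere_def norm_Pair)
  obtain e :: "real^'k" where e: "norm e = 1"
    using vector_choose_size[of 1] by auto
  define x where "x = l *v X + s *v (Y *\<^sub>R e)"
  have lx: "transpose l *v x = X"
    unfolding x_def using orth by (rule block_cols_orthogonal_coordinates)
  have "(norm x)\<^sup>2 = 1"
    using block_cols_orthogonal_coordinates(2)[OF orth, of X "Y *\<^sub>R e"] XY Y e
    by (simp add: x_def)
  then have "x \<in> sphere 0 1"
    using norm_ge_zero[of x] by (auto simp: power2_eq_1_iff)
  moreover have "sqrt (1 - (norm X)\<^sup>2) = Y"
    using XY Y by (simp add: real_sqrt_unique)
  then have "p = hemisphere_coords l x"
    unfolding p hemisphere_coords_def lx by simp
  ultimately show "p \<in> hemisphere_coords l ` sphere 0 1"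
    by blast
qed

lemma hemisphere_coords_image:
  fixes l :: "real^'m::finite^('m + 'k::finite)" and s :: "real^'k^('m + 'k)"
  assumes "orthogonal_matrix (block_cols l s)"
  shows "hemisphere_coords l ` sphere 0 1 = upper_hemisphere"
    and "hemisphere_coords l ` cball 0 1 = upper_hemisphere"
  using hemisphere_coords_cball_subset[OF assms] upper_hemisphere_subset_hemisphere_coords[OF assms]
    image_mono[OF sphere_cball, of "hemisphere_coords l" 0 1]
  by auto

lemma continuous_image_Inf_minimum:
  fixes f :: "'a::topological_space \<Rightarrow> real"
  assumes "compact A" "A \<noteq> {}" "continuous_on A f"
  shows "Inf (f ` A) \<in> f ` A" and "\<And>y. y \<in> f ` A \<Longrightarrow> Inf (f ` A) \<le> y"
proof -
  obtain a where a: "a \<in> A" "\<And>x. x \<in> A \<Longrightarrow> f a \<le> f x"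
    using continuous_attains_inf[OF assms] by blast
  then have "Inf (f ` A) = f a"
    by (intro cInf_eq_minimum) auto
  with a show "Inf (f ` A) \<in> f ` A" and "\<And>y. y \<in> f ` A \<Longrightarrow> Inf (f ` A) \<le> y"
    by auto
qed

theorem mainTheorem5:
  fixes h :: "real ^ ('m::finite + 'k::finite) \<Rightarrow> real"
    and l :: "real ^ 'm ^ ('m + 'k)"
    and s :: "real ^ 'k ^ ('m + 'k)"
    and r :: nat
    and \<theta> :: "nat \<Rightarrow> real"
    and v :: "nat \<Rightarrow> real ^ 'k"
    and hhat :: "real ^ ('m + 'k) \<Rightarrow> real"
    and fhat :: "real ^ 'm \<Rightarrow> real \<Rightarrow> real"
    and \<rho>p \<rho>m \<rho> :: real
  assumes hpoly: "real_poly_fun h"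
    and orth: "orthogonal_matrix (block_cols l s)"
    and \<theta>pos: "\<And>j. j \<in> {1..r} \<Longrightarrow> \<theta> j > 0"
    and vball: "\<And>j. j \<in> {1..r} \<Longrightarrow> v j \<in> cball 0 1"
    and hhat_def: "hhat =  (\<lambda>x. \<Sum>j=1..r. \<theta> j * h (l *v (transpose l *v x)
                     + sqrt (1 - (norm (transpose l *v x))\<^sup>2) *\<^sub>R (s *v v j)))"
    and fhat_def: "fhat =  (\<lambda>X Y. \<Sum>j=1..r. \<theta> j * h (l *v X + Y *\<^sub>R (s *v v j)))"
    and \<rho>p_def: "\<rho>p =  Inf {fhat X Y | X Y. (X, Y) \<in> sphere (0 :: (real ^ 'm) \<times> real) 1 \<and> Y \<ge> 0}"
    and \<rho>m_def: "\<rho>m =  Inf {fhat X (- Y) | X Y. (X, Y) \<in> sphere (0 :: (real ^ 'm) \<times> real) 1 \<and> Y \<le> 0}"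
    and \<rho>_def: "\<rho> =  min \<rho>p \<rho>m"
  shows "(\<exists>x\<in>sphere 0 1. hhat x = \<rho>) \<and> (\<forall>x\<in>sphere 0 1. \<rho> \<le> hhat x)
       \<and> (\<exists>x\<in>cball 0 1. hhat x = \<rho>) \<and> (\<forall>x\<in>cball 0 1. \<rho> \<le> hhat x)"
proof -
  let ?g = "case_prod fhat" and ?H = "upper_hemisphere :: ((real^'m) \<times> real) set"
  have \<rho>: "\<rho> = Inf (?g ` ?H)"
    unfolding \<rho>_def \<rho>p_def \<rho>m_def values_upper_hemisphere values_lower_hemisphere_reflected
    by simp
  have "continuous_on ?H ?g"
    unfolding fhat_def case_prod_beta
    by (intro continuous_intros continuous_on_compose2[OF real_poly_fun_continuous_on[OF hpoly]]
        continuous_on_compose2[OF matrix_vector_mult_linear_continuous_on[of UNIV]]) auto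
  note min = continuous_image_Inf_minimum[OF compact_upper_hemisphere upper_hemisphere_nonempty this]
  have hhat_comp: "hhat = ?g \<circ> hemisphere_coords l"
    by (simp add: hhat_def fhat_def hemisphere_coords_def fun_eq_iff)
  have range: "hhat ` sphere 0 1 = ?g ` ?H" "hhat ` cball 0 1 = ?g ` ?H"
    unfolding hhat_comp image_comp[symmetric] hemisphere_coords_image[OF orth] by (rule refl)+
  have "\<rho> \<in> hhat ` sphere 0 1"
    using min(1) unfolding \<rho> range .
  moreover have "\<rho> \<le> hhat x" if "x \<in> cball 0 1" for x
    using min(2) that unfolding \<rho> by (metis imageI range(2))
  ultimately show ?thesis
    using sphere_cball by blast
qed

end
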